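(* Let $m,n>0$, $h\ge0$ and $\theta>0$, and let $g(u)=\bar\Psi_{m+h,n}\big(\theta\,\bar\Psi_{m,n}^{-1}(u)\big)$ for $u\in(0,1)$. If $\theta\le1$, then $g$ is concave on $(0,1)$; if $\theta>1$ and $h=0$, then $g$ is convex on $(0,1)$.
   Context: $\Psi_{k,n}$ denotes the CDF of $U/W$, where $U\sim\chi^2_k$ and $W\sim\chi^2_n$ are independent (equivalently, of $(k/n)F_{k,n}$); $\bar\Psi_{k,n}=1-\Psi_{k,n}$ and $\bar\Psi_{k,n}^{-1}:(0,1)\to(0,\infty)$ is the inverse of $\bar\Psi_{k,n}$. *)

theory Defs
  imports "HOL-Probability.Probability"
begin

definition chi2_density :: "real \<Rightarrow> real \<Rightarrow> real" where
  "chi2_density k x =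
     (if x > 0 then x powr (k/2 - 1) * exp (- x/2) / (2 powr (k/2) * Gamma (k/2)) else 0)"

definition chi2 :: "real \<Rightarrow> real measure" where
  "chi2 k = density lborel (\<lambda>x. ennreal (chi2_density k x))"

definition Psi :: "real \<Rightarrow> real \<Rightarrow> real \<Rightarrow> real" where
  "Psi k n x = measure (chi2 k \<Otimes>\<^sub>M chi2 n) {p. fst p / snd p \<le> x}"

definition Psibar :: "real \<Rightarrow> real \<Rightarrow> real \<Rightarrow> real" where
  "Psibar k n x = 1 - Psi k n x"

definition Psibar_inv :: "real \<Rightarrow> real \<Rightarrow> real \<Rightarrow> real" where
  "Psibar_inv k n u = (THE x. x > 0 \<and> Psibar k n x = u)"

end

theory Submission
  imports Defs
begin

text \<open>
  For independent U ~ chi2(k) and W ~ chi2(n), Fubini shows that U/W has the beta prime density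
  f_k(t) = t^(k/2-1) (1+t)^(-(k+n)/2) / B(k/2, n/2) on (0,oo). Hence Psi k n is a strictly
  increasing bijection from (0,oo) onto (0,1) with derivative f_k, and its complement has a
  differentiable inverse. With x = Psibar_inv m n u, which decreases in u, the chain rule gives
  g'(u) = \<theta> f_(m+h)(\<theta> x) / f_m(x), a positive constant times
  (x/(1+\<theta> x))^(h/2) ((1+x)/(1+\<theta> x))^((m+n)/2). For \<theta> \<le> 1 both factors increase with x,
  so g' decreases in u; for \<theta> > 1 and h = 0 only the second factor remains, and it decreases
  with x, so g' increases in u.
\<close>

lemma nn_integral_powr_exp_rate:
  fixes s l :: real
  assumes s: "s > 0" and l: "l > 0"
  shows "(\<integral>\<^sup>+w. ennreal (if w > 0 then w powr (s - 1) * exp (- (l * w)) else 0) \<partial>lborel)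
         = ennreal (Gamma s / l powr s)"
proof -
  define f where "f w = ennreal (if w > 0 then w powr (s - 1) * exp (- (l * w)) else 0)" for w
  have rescale: "f (0 + 1 / l * v)
      = ennreal (l powr (1 - s)) * ennreal (indicator {0..} v * v powr (s - 1) / exp v)" for v
    using l by (cases "v > 0")
      (auto simp: f_def indicator_def powr_divide powr_diff exp_minus ennreal_mult'[symmetric]
        zero_less_divide_iff field_simps)
  have "integral\<^sup>N lborel f = ennreal (1 / l) * (\<integral>\<^sup>+v. ennreal (l powr (1 - s)) *
          ennreal (indicator {0..} v * v powr (s - 1) / exp v) \<partial>lborel)"
    using l by (subst nn_integral_real_affine[where c = "1 / l" and t = 0])
      (simp_all add: f_def[abs_def] rescale[symmetric])
  also have "\<dots> = ennreal (1 / l) * (ennreal (l powr (1 - s)) * ennreal (Gamma s))"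
    by (subst nn_integral_cmult) (auto simp: Gamma_conv_nn_integral_real[OF s])
  also have "\<dots> = ennreal (Gamma s / l powr s)"
    using l s by (simp add: ennreal_mult'[symmetric] powr_diff field_simps)
  finally show ?thesis unfolding f_def .
qed

lemma chi2_density_nonneg: "k > 0 \<Longrightarrow> chi2_density k x \<ge> 0"
  unfolding chi2_density_def by auto

lemma borel_measurable_chi2_density [measurable]: "chi2_density k \<in> borel_measurable borel"
  unfolding chi2_density_def by measurable

lemma nn_integral_chi2_density:
  assumes k: "k > 0"
  shows "(\<integral>\<^sup>+x. ennreal (chi2_density k x) \<partial>lborel) = 1"
proof -
  have "(\<lambda>x. ennreal (chi2_density k x)) = (\<lambda>x. ennreal (1 / (2 powr (k/2) * Gamma (k/2))) *
      ennreal (if x > 0 then x powr (k/2 - 1) * exp (- ((1/2) * x)) else 0))"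
    using k by (auto simp: chi2_density_def ennreal_mult'[symmetric])
  moreover have "Gamma (k/2) > 0" using k by simp
  ultimately have "(\<integral>\<^sup>+x. ennreal (chi2_density k x) \<partial>lborel)
      = ennreal (1 / (2 powr (k/2) * Gamma (k/2))) * ennreal (Gamma (k/2) / (1/2) powr (k/2))"
    using k by (simp only:) (simp add: nn_integral_cmult nn_integral_powr_exp_rate)
  also have "\<dots> = 1"
    using \<open>Gamma (k/2) > 0\<close> by (simp add: ennreal_mult'[symmetric] powr_divide)
  finally show ?thesis .
qed

lemma prob_space_chi2: "k > 0 \<Longrightarrow> prob_space (chi2 k)"
  unfolding chi2_def by (rule prob_spaceI) (simp add: emeasure_density nn_integral_chi2_density)

definition beta_prime_density :: "real \<Rightarrow> real \<Rightarrow> real \<Rightarrow> real" where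
  "beta_prime_density a b t =
     (if t > 0 then t powr (a - 1) / ((1 + t) powr (a + b) * Beta a b) else 0)"

lemma Beta_real_pos: "a > 0 \<Longrightarrow> b > 0 \<Longrightarrow> Beta a b > (0::real)"
  unfolding Beta_def by simp

lemma beta_prime_density_pos: "a > 0 \<Longrightarrow> b > 0 \<Longrightarrow> t > 0 \<Longrightarrow> beta_prime_density a b t > 0"
  unfolding beta_prime_density_def by (simp add: Beta_real_pos)

lemma beta_prime_density_nonneg: "a > 0 \<Longrightarrow> b > 0 \<Longrightarrow> beta_prime_density a b t \<ge> 0"
  unfolding beta_prime_density_def by (simp add: Beta_real_pos less_imp_le)

lemma borel_measurable_beta_prime_density [measurable]:
  "beta_prime_density a b \<in> borel_measurable borel"
  unfolding beta_prime_density_def by measurable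

lemma continuous_on_beta_prime_density:
  assumes "a > 0" "b > 0"
  shows "continuous_on {0<..} (beta_prime_density a b)"
proof -
  have "continuous_on {0<..} (\<lambda>t. t powr (a - 1) / ((1 + t) powr (a + b) * Beta a b))"
    using Beta_real_pos[OF assms] by (intro continuous_intros) auto
  then show ?thesis
    by (rule continuous_on_cong[THEN iffD1, rotated 2]) (auto simp: beta_prime_density_def)
qed

lemma nn_integral_chi2_quotient_kernel:
  assumes k: "k > 0" and n: "n > 0"
  shows "(\<integral>\<^sup>+w. ennreal (chi2_density n w * w * chi2_density k (w * t)) \<partial>lborel)
       = ennreal (beta_prime_density (k/2) (n/2) t)"
proof (cases "t > 0")
  case False
  then have "(\<lambda>w. ennreal (chi2_density n w * w * chi2_density k (w * t))) = (\<lambda>_. 0)"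
    by (intro ext, cases "w > 0") (auto simp: chi2_density_def zero_less_mult_iff)
  then show ?thesis using False by (simp add: beta_prime_density_def)
next
  case t: True
  define C where
    "C = t powr (k/2 - 1) / (2 powr (k/2) * Gamma (k/2) * (2 powr (n/2) * Gamma (n/2)))"
  have C: "C > 0" unfolding C_def using k n t by simp
  have kernel: "chi2_density n w * w * chi2_density k (w * t) =
     C * (if w > 0 then w powr (k/2 + n/2 - 1) * exp (- ((1 + t)/2 * w)) else 0)" for w
  proof (cases "w > 0")
    case True
    have "chi2_density n w * w * chi2_density k (w * t)
        = w powr (n/2 - 1) * w powr 1 * (w * t) powr (k/2 - 1) * (exp (- w/2) * exp (- (w * t)/2))
          / (2 powr (k/2) * Gamma (k/2) * (2 powr (n/2) * Gamma (n/2)))"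
      using True t by (simp add: chi2_density_def mult_ac)
    also have "w powr (n/2 - 1) * w powr 1 * (w * t) powr (k/2 - 1)
        = t powr (k/2 - 1) * w powr (n/2 - 1 + 1 + (k/2 - 1))"
      using True t by (simp only: powr_mult[of w t] powr_add less_imp_le) (simp add: mult_ac)
    also have "n/2 - 1 + 1 + (k/2 - 1) = k/2 + n/2 - 1"
      by simp
    also have "exp (- w/2) * exp (- (w * t)/2) = exp (- ((1 + t)/2 * w))"
      by (simp add: exp_add[symmetric] field_simps)
    finally show ?thesis
      using True by (simp add: C_def)
  qed (simp add: chi2_density_def)
  have "(\<integral>\<^sup>+w. ennreal (chi2_density n w * w * chi2_density k (w * t)) \<partial>lborel)
      = ennreal C * ennreal (Gamma (k/2 + n/2) / ((1 + t)/2) powr (k/2 + n/2))"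
    unfolding kernel using C t k n
    by (simp add: ennreal_mult' nn_integral_cmult nn_integral_powr_exp_rate)
  also have "\<dots> = ennreal (C * (Gamma (k/2 + n/2) / ((1 + t)/2) powr (k/2 + n/2)))"
    using C by (simp only: ennreal_mult' less_imp_le)
  also have "C * (Gamma (k/2 + n/2) / ((1 + t)/2) powr (k/2 + n/2))
      = beta_prime_density (k/2) (n/2) t"
    using t k n by (simp add: beta_prime_density_def C_def Beta_def powr_divide powr_add)
  finally show ?thesis .
qed

lemma nn_integral_indicator_quotient_le:
  fixes f :: "real \<Rightarrow> ennreal"
  assumes [measurable]: "f \<in> borel_measurable borel" and w: "w > 0"
  shows "(\<integral>\<^sup>+u. f u * indicator {u. u / w \<le> x} u \<partial>lborel)
       = ennreal w * (\<integral>\<^sup>+t. f (w * t) * indicator {..x} t \<partial>lborel)"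
  using w by (subst nn_integral_real_affine[where c = w and t = 0])
    (auto intro!: arg_cong2[where f = "(*)"] nn_integral_cong simp: indicator_def)

lemma sets_pair_lborel_quotient_le [measurable]:
  "{p :: real \<times> real. fst p / snd p \<le> x} \<in> sets (lborel \<Otimes>\<^sub>M lborel)"
proof -
  have "{p \<in> space (lborel \<Otimes>\<^sub>M lborel). fst p / snd p \<le> x} \<in> sets (lborel \<Otimes>\<^sub>M lborel)"
    by measurable
  then show ?thesis by (simp add: space_pair_measure)
qed

lemma emeasure_chi2_quotient_le:
  assumes k: "k > 0" and n: "n > 0"
  shows "emeasure (chi2 k \<Otimes>\<^sub>M chi2 n) {p. fst p / snd p \<le> x}
       = (\<integral>\<^sup>+t. ennreal (beta_prime_density (k/2) (n/2) t) * indicator {..x} t \<partial>lborel)"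
proof -
  let ?A = "{p :: real \<times> real. fst p / snd p \<le> x}"
  let ?p = "\<lambda>u w. ennreal (chi2_density k u) * ennreal (chi2_density n w)"
  let ?q = "\<lambda>w t. ennreal (chi2_density n w * w * chi2_density k (w * t))"
  have "sigma_finite_measure (chi2 n)"
    using prob_space_chi2[OF n] by (rule prob_space_imp_sigma_finite)
  then have product: "chi2 k \<Otimes>\<^sub>M chi2 n = density (lborel \<Otimes>\<^sub>M lborel) (\<lambda>(u, w). ?p u w)"
    unfolding chi2_def
    by (intro pair_measure_density) (auto simp: lborel.sigma_finite_measure_axioms)
  have inner: "(\<integral>\<^sup>+u. ?p u w * indicator ?A (u, w) \<partial>lborel)
      = (\<integral>\<^sup>+t. ?q w t * indicator {..x} t \<partial>lborel)" for w
  proof (cases "w > 0")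
    case w: True
    have "(\<integral>\<^sup>+u. ?p u w * indicator ?A (u, w) \<partial>lborel)
        = ennreal (chi2_density n w) *
          (\<integral>\<^sup>+u. ennreal (chi2_density k u) * indicator {u. u / w \<le> x} u \<partial>lborel)"
      by (subst nn_integral_cmult[symmetric])
        (auto intro!: nn_integral_cong simp: indicator_def mult.commute)
    also have "\<dots> = ennreal (chi2_density n w * w) *
        (\<integral>\<^sup>+t. ennreal (chi2_density k (w * t)) * indicator {..x} t \<partial>lborel)"
      using w n
      by (simp add: nn_integral_indicator_quotient_le ennreal_mult' chi2_density_nonneg mult.assoc)
    also have "\<dots> = (\<integral>\<^sup>+t. ?q w t * indicator {..x} t \<partial>lborel)"
      using w n by (subst nn_integral_cmult[symmetric])
        (auto intro!: nn_integral_cong simp: ennreal_mult' chi2_density_nonneg mult.assoc)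
    finally show ?thesis .
  qed (simp add: chi2_density_def)
  have "emeasure (chi2 k \<Otimes>\<^sub>M chi2 n) ?A
      = (\<integral>\<^sup>+w. \<integral>\<^sup>+u. ?p u w * indicator ?A (u, w) \<partial>lborel \<partial>lborel)"
    unfolding product using sets_pair_lborel_quotient_le[of x]
    by (subst emeasure_density) (auto simp: lborel_pair.nn_integral_snd[symmetric] case_prod_beta)
  also have "\<dots> = (\<integral>\<^sup>+w. \<integral>\<^sup>+t. ?q w t * indicator {..x} t \<partial>lborel \<partial>lborel)"
    by (simp only: inner)
  also have "\<dots> = (\<integral>\<^sup>+t. (\<integral>\<^sup>+w. ?q w t \<partial>lborel) * indicator {..x} t \<partial>lborel)"
    by (subst lborel_pair.Fubini') (auto intro!: nn_integral_cong nn_integral_multc)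
  also have "\<dots> = (\<integral>\<^sup>+t. ennreal (beta_prime_density (k/2) (n/2) t) * indicator {..x} t \<partial>lborel)"
    using k n by (simp add: nn_integral_chi2_quotient_kernel)
  finally show ?thesis .
qed

lemma has_real_derivative_nn_integral_Iic:
  fixes F f :: "real \<Rightarrow> real"
  assumes F: "\<And>y. ennreal (F y) = (\<integral>\<^sup>+t. ennreal (f t) * indicator {..y} t \<partial>lborel)"
    and F_nonneg: "\<And>y. F y \<ge> 0" and f_nonneg: "\<And>t. f t \<ge> 0"
    and [measurable]: "f \<in> borel_measurable borel"
    and cont: "continuous_on {a..b} f" and x: "a < x" "x < b"
  shows "(F has_real_derivative f x) (at x)"
proof -
  have F_Icc: "F y = F a + integral {a..y} f" if y: "a \<le> y" "y \<le> b" for y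
  proof -
    have integral: "(f has_integral integral {a..y} f) {a..y}"
      using y
      by (intro integrable_integral integrable_continuous_interval continuous_on_subset[OF cont]) auto
    then have "integral {a..y} f \<ge> 0"
      by (rule has_integral_nonneg) (simp add: f_nonneg)
    from integral have tail:
      "(\<integral>\<^sup>+t. ennreal (f t) * indicator {a<..y} t \<partial>lborel) = ennreal (integral {a..y} f)"
      by (subst nn_integral_has_integral_lebesgue[symmetric, OF f_nonneg])
        (auto intro!: nn_integral_cong_AE eventually_mono[OF AE_lborel_singleton[of a]]
          simp: indicator_def)
    have "ennreal (F y)
        = (\<integral>\<^sup>+t. ennreal (f t) * indicator {..a} t + ennreal (f t) * indicator {a<..y} t \<partial>lborel)"
      unfolding F using y by (intro nn_integral_cong) (auto simp: indicator_def)
    also have "\<dots> = ennreal (F a) + ennreal (integral {a..y} f)"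
      by (subst nn_integral_add) (auto simp: F tail)
    finally show ?thesis
      using F_nonneg \<open>integral {a..y} f \<ge> 0\<close>
      by (simp add: ennreal_plus[symmetric] del: ennreal_plus)
  qed
  have "((\<lambda>y. integral {a..y} f) has_real_derivative f x) (at x within {a..b})"
    using cont x by (intro integral_has_real_derivative) auto
  then have "((\<lambda>y. F a + integral {a..y} f) has_real_derivative f x) (at x)"
    using x by (intro derivative_eq_intros) (auto simp: at_within_Icc_at)
  then show ?thesis
    by (rule has_field_derivative_transform_within_open[where S = "{a<..<b}"])
      (use x in \<open>auto simp: F_Icc[symmetric]\<close>)
qed

lemma Psi_eq_nn_integral:
  assumes "k > 0" "n > 0"
  shows "ennreal (Psi k n x)
       = (\<integral>\<^sup>+t. ennreal (beta_prime_density (k/2) (n/2) t) * indicator {..x} t \<partial>lborel)"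
proof -
  interpret prob_space "chi2 k \<Otimes>\<^sub>M chi2 n"
    using assms by (intro prob_space_pair prob_space_chi2)
  have "{p. fst p / snd p \<le> x} \<in> events"
    using sets_pair_lborel_quotient_le[of x] by (simp add: chi2_def)
  then show ?thesis
    unfolding Psi_def by (simp add: emeasure_eq_measure[symmetric] emeasure_chi2_quotient_le assms)
qed

lemma Psi_eq_cdf: "Psi k n = cdf (distr (chi2 k \<Otimes>\<^sub>M chi2 n) borel (\<lambda>p. fst p / snd p))"
  by (auto simp: Psi_def cdf_def measure_distr space_pair_measure chi2_def vimage_def)

lemma real_distribution_chi2_quotient:
  "k > 0 \<Longrightarrow> n > 0 \<Longrightarrow> real_distribution (distr (chi2 k \<Otimes>\<^sub>M chi2 n) borel (\<lambda>p. fst p / snd p))"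
  by (intro prob_space.real_distribution_distr prob_space_pair prob_space_chi2)
    (auto simp: chi2_def)

lemma Psi_nonpos:
  assumes "k > 0" "n > 0" "x \<le> 0"
  shows "Psi k n x = 0"
proof -
  have "(\<lambda>t. ennreal (beta_prime_density (k/2) (n/2) t) * indicator {..x} t) = (\<lambda>_. 0)"
    using assms by (auto simp: beta_prime_density_def indicator_def)
  then have "ennreal (Psi k n x) = 0"
    using assms by (simp add: Psi_eq_nn_integral)
  then show ?thesis
    by (simp add: Psi_def)
qed

lemma Psi_has_real_derivative:
  assumes k: "k > 0" and n: "n > 0" and x: "x > 0"
  shows "(Psi k n has_real_derivative beta_prime_density (k/2) (n/2) x) (at x)"
proof (rule has_real_derivative_nn_integral_Iic)
  show "continuous_on {x/2..2*x} (beta_prime_density (k/2) (n/2))"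
    using k n x by (intro continuous_on_subset[OF continuous_on_beta_prime_density]) auto
  show "Psi k n y \<ge> 0" for y
    by (simp add: Psi_def)
qed (use k n x in \<open>simp_all add: Psi_eq_nn_integral beta_prime_density_nonneg\<close>)

lemma Psi_strict_mono_on:
  assumes "k > 0" "n > 0"
  shows "strict_mono_on {0<..} (Psi k n)"
proof (rule strict_mono_onI)
  fix a b :: real
  assume a: "a \<in> {0<..}" and "a < b"
  show "Psi k n a < Psi k n b"
  proof (rule DERIV_pos_imp_increasing[OF \<open>a < b\<close>])
    fix x assume "a \<le> x"
    with a have "x > 0" by simp
    then show "\<exists>y. (Psi k n has_real_derivative y) (at x) \<and> y > 0"
      using Psi_has_real_derivative[OF assms \<open>x > 0\<close>] beta_prime_density_pos[of "k/2" "n/2" x]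
        assms \<open>x > 0\<close> by auto
  qed
qed

lemma Psi_surj:
  assumes k: "k > 0" and n: "n > 0" and u: "0 < u" "u < 1"
  shows "\<exists>x>0. Psi k n x = u"
proof -
  interpret real_distribution "distr (chi2 k \<Otimes>\<^sub>M chi2 n) borel (\<lambda>p. fst p / snd p)"
    using k n by (rule real_distribution_chi2_quotient)
  have "\<forall>\<^sub>F x in at_right 0. Psi k n x < u"
    using cdf_is_right_cont[of 0] Psi_nonpos[OF k n] u
    by (intro order_tendstoD) (auto simp: continuous_within Psi_eq_cdf)
  then obtain a where a: "a > 0" "Psi k n a < u"
    by (auto simp: eventually_at_right_field dest: dense)
  have "\<forall>\<^sub>F x in at_top. Psi k n x > u"
    using cdf_lim_at_top_prob u by (intro order_tendstoD) (auto simp: Psi_eq_cdf)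
  then obtain N where N: "\<And>x. x \<ge> N \<Longrightarrow> Psi k n x > u"
    by (auto simp: eventually_at_top_linorder)
  define b where "b = max a N"
  have b: "b \<ge> a" "Psi k n b > u"
    using N by (auto simp: b_def)
  have "continuous_on {a..b} (Psi k n)"
    using a Psi_has_real_derivative[OF k n, THEN DERIV_isCont]
    by (intro continuous_at_imp_continuous_on ballI) auto
  then obtain x where "a \<le> x" "Psi k n x = u"
    using IVT'[of "Psi k n" a u b] a b by fastforce
  with a show ?thesis
    by (intro exI[of _ x]) auto
qed

lemma Psibar_inv_eqI:
  assumes "m > 0" "n > 0" "x > 0" "Psibar m n x = u"
  shows "Psibar_inv m n u = x"
  unfolding Psibar_inv_def
proof (rule the_equality)
  fix y assume "y > 0 \<and> Psibar m n y = u"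
  then show "y = x"
    using strict_mono_on_imp_inj_on[OF Psi_strict_mono_on[OF assms(1,2)]] assms
    by (auto simp: Psibar_def inj_on_def)
qed (use assms in simp)

lemma Psibar_inv_pos_and_inverse:
  assumes "m > 0" "n > 0" "0 < u" "u < 1"
  shows "Psibar_inv m n u > 0 \<and> Psibar m n (Psibar_inv m n u) = u"
proof -
  obtain x where "x > 0" "Psi m n x = 1 - u"
    using Psi_surj[of m n "1 - u"] assms by auto
  then show ?thesis
    using Psibar_inv_eqI[of m n x u] assms by (simp add: Psibar_def)
qed

lemma Psibar_inv_antimono:
  assumes "m > 0" "n > 0" "0 < u" "u \<le> v" "v < 1"
  shows "Psibar_inv m n v \<le> Psibar_inv m n u"
proof (rule ccontr)
  assume "\<not> ?thesis"
  then have "Psi m n (Psibar_inv m n u) < Psi m n (Psibar_inv m n v)"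
    using Psibar_inv_pos_and_inverse[of m n u] assms
    by (intro strict_mono_onD[OF Psi_strict_mono_on]) auto
  then show False
    using Psibar_inv_pos_and_inverse[of m n u] Psibar_inv_pos_and_inverse[of m n v] assms
    by (simp add: Psibar_def)
qed

lemma Psibar_has_real_derivative:
  assumes "k > 0" "n > 0" "x > 0"
  shows "(Psibar k n has_real_derivative - beta_prime_density (k/2) (n/2) x) (at x)"
  using DERIV_diff[OF DERIV_const[of 1] Psi_has_real_derivative[OF assms]]
  by (simp add: Psibar_def[abs_def])

lemma Psibar_inv_has_real_derivative:
  assumes m: "m > 0" and n: "n > 0" and u: "0 < u" "u < 1"
  shows "(Psibar_inv m n has_real_derivative
           inverse (- beta_prime_density (m/2) (n/2) (Psibar_inv m n u))) (at u)"
proof -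
  let ?x = "Psibar_inv m n u"
  have x: "?x > 0" "Psibar m n ?x = u"
    using Psibar_inv_pos_and_inverse[OF m n u] by auto
  have "isCont (Psibar_inv m n) (Psibar m n ?x)"
  proof (rule isCont_inverse_function2
      [where f = "Psibar m n" and x = ?x and a = "?x/2" and b = "2 * ?x"])
    fix z assume "?x/2 \<le> z"
    then have "z > 0" using x by linarith
    then show "Psibar_inv m n (Psibar m n z) = z" "isCont (Psibar m n) z"
      using Psibar_inv_eqI[OF m n] Psibar_has_real_derivative[OF m n, THEN DERIV_isCont] by auto
  qed (use x in auto)
  then have "isCont (Psibar_inv m n) u"
    using x by simp
  show ?thesis
  proof (rule DERIV_inverse_function[where a = 0 and b = 1])
    show "(Psibar m n has_real_derivative - beta_prime_density (m/2) (n/2) ?x) (at ?x)"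
      by (rule Psibar_has_real_derivative[OF m n x(1)])
    show "- beta_prime_density (m/2) (n/2) ?x \<noteq> 0"
      using beta_prime_density_pos[of "m/2" "n/2" ?x] m n x by simp
    show "Psibar m n (Psibar_inv m n y) = y" if "0 < y" "y < 1" for y
      using Psibar_inv_pos_and_inverse[OF m n that] by simp
  qed fact+
qed

lemma beta_prime_density_ratio:
  assumes a: "a > 0" and b: "b > 0" and c: "c > 0" and \<theta>: "\<theta> > 0" and x: "x > 0"
  shows "\<theta> * beta_prime_density c b (\<theta> * x) / beta_prime_density a b x
       = \<theta> powr c * Beta a b / Beta c b
         * (x / (1 + \<theta> * x)) powr (c - a) * ((1 + x) / (1 + \<theta> * x)) powr (a + b)"
proof -
  have "1 + \<theta> * x > 0" using \<theta> x by (simp add: add_pos_pos)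
  then show ?thesis
    using a b c \<theta> x Beta_real_pos[OF a b] Beta_real_pos[OF c b]
    by (simp add: beta_prime_density_def powr_divide powr_mult powr_diff powr_add field_simps)
qed

lemma beta_prime_density_ratio_mono:
  assumes a: "a > 0" and b: "b > 0" and "a \<le> c" and \<theta>: "0 < \<theta>" "\<theta> \<le> 1" and x: "0 < x" "x \<le> y"
  shows "\<theta> * beta_prime_density c b (\<theta> * x) / beta_prime_density a b x
       \<le> \<theta> * beta_prime_density c b (\<theta> * y) / beta_prime_density a b y"
proof -
  define K where "K = \<theta> powr c * Beta a b / Beta c b"
  have c: "c > 0" using a \<open>a \<le> c\<close> by linarith
  have "K > 0"
    unfolding K_def using Beta_real_pos[OF a b] Beta_real_pos[OF c b] \<theta> by simp
  have "x / (1 + \<theta> * x) \<le> y / (1 + \<theta> * y)"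
    using \<theta> x by (simp add: divide_simps add_pos_pos algebra_simps)
  then have P: "(x / (1 + \<theta> * x)) powr (c - a) \<le> (y / (1 + \<theta> * y)) powr (c - a)"
    using \<open>a \<le> c\<close> \<theta> x by (intro powr_mono2) (auto simp: add_pos_pos)
  have "\<theta> * (y - x) \<le> y - x"
    using \<theta> x by (intro mult_left_le_one_le) auto
  then have "(1 + x) / (1 + \<theta> * x) \<le> (1 + y) / (1 + \<theta> * y)"
    using \<theta> x by (simp add: divide_simps add_pos_pos algebra_simps)
  then have Q: "((1 + x) / (1 + \<theta> * x)) powr (a + b) \<le> ((1 + y) / (1 + \<theta> * y)) powr (a + b)"
    using a b \<theta> x by (intro powr_mono2) (auto simp: add_pos_pos)
  have "K * (x / (1 + \<theta> * x)) powr (c - a) * ((1 + x) / (1 + \<theta> * x)) powr (a + b)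
      \<le> K * (y / (1 + \<theta> * y)) powr (c - a) * ((1 + y) / (1 + \<theta> * y)) powr (a + b)"
    using \<open>K > 0\<close> P Q by (intro mult_mono mult_left_mono) auto
  then show ?thesis
    using beta_prime_density_ratio[OF a b c \<theta>(1)] x unfolding K_def by simp
qed

lemma beta_prime_density_ratio_antimono:
  assumes a: "a > 0" and b: "b > 0" and \<theta>: "\<theta> \<ge> 1" and x: "0 < x" "x \<le> y"
  shows "\<theta> * beta_prime_density a b (\<theta> * y) / beta_prime_density a b y
       \<le> \<theta> * beta_prime_density a b (\<theta> * x) / beta_prime_density a b x"
proof -
  have "y - x \<le> \<theta> * (y - x)"
    using \<theta> x by (intro mult_le_cancel_right1[THEN iffD2]) auto
  then have "(1 + y) / (1 + \<theta> * y) \<le> (1 + x) / (1 + \<theta> * x)"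
    using \<theta> x by (simp add: divide_simps add_pos_pos algebra_simps)
  then have "((1 + y) / (1 + \<theta> * y)) powr (a + b) \<le> ((1 + x) / (1 + \<theta> * x)) powr (a + b)"
    using a b \<theta> x by (intro powr_mono2) (auto simp: add_pos_pos)
  moreover have "1 + \<theta> * x > 0" "1 + \<theta> * y > 0"
    using \<theta> x by (simp_all add: add_pos_pos)
  ultimately show ?thesis
    using beta_prime_density_ratio[OF a b a, of \<theta>] \<theta> x
    by (simp add: mult_left_mono)
qed

lemma Psibar_scaled_Psibar_inv_has_real_derivative:
  assumes k: "k > 0" and m: "m > 0" and n: "n > 0" and \<theta>: "\<theta> > 0" and u: "0 < u" "u < 1"
  shows "((\<lambda>u. Psibar k n (\<theta> * Psibar_inv m n u)) has_real_derivative
           \<theta> * beta_prime_density (k/2) (n/2) (\<theta> * Psibar_inv m n u)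
             / beta_prime_density (m/2) (n/2) (Psibar_inv m n u)) (at u)"
proof -
  let ?x = "Psibar_inv m n u"
  have "?x > 0"
    using Psibar_inv_pos_and_inverse[OF m n u] by simp
  then have "(Psibar k n has_real_derivative - beta_prime_density (k/2) (n/2) (\<theta> * ?x))
      (at (\<theta> * ?x))"
    using \<theta> by (intro Psibar_has_real_derivative[OF k n]) simp
  from DERIV_chain2[OF this DERIV_cmult[OF Psibar_inv_has_real_derivative[OF m n u]]]
  have "((\<lambda>u. Psibar k n (\<theta> * Psibar_inv m n u)) has_real_derivative
      - beta_prime_density (k/2) (n/2) (\<theta> * ?x)
        * (\<theta> * inverse (- beta_prime_density (m/2) (n/2) ?x))) (at u)" .
  then show ?thesis
    by (simp add: inverse_eq_divide mult.commute)
qed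

theorem mainTheorem7:
  fixes m n h \<theta> :: real
  assumes "m > 0" and "n > 0" and "h \<ge> 0" and "\<theta> > 0"
  defines "g \<equiv> (\<lambda>u. Psibar (m + h) n (\<theta> * Psibar_inv m n u))"
  shows "(\<theta> \<le> 1 \<longrightarrow> concave_on {0<..<1} g) \<and>
         (\<theta> > 1 \<and> h = 0 \<longrightarrow> convex_on {0<..<1} g)"
proof -
  define R where "R u = \<theta> * beta_prime_density ((m + h)/2) (n/2) (\<theta> * Psibar_inv m n u)
    / beta_prime_density (m/2) (n/2) (Psibar_inv m n u)" for u
  have g': "(g has_real_derivative R u) (at u)" if "u \<in> {0<..<1}" for u
    unfolding g_def R_def using assms that
    by (intro Psibar_scaled_Psibar_inv_has_real_derivative) auto
  have x: "0 < Psibar_inv m n v" "Psibar_inv m n v \<le> Psibar_inv m n u"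
    if "u \<in> {0<..<1}" "v \<in> {0<..<1}" "u \<le> v" for u v
    using that assms Psibar_inv_pos_and_inverse[of m n v] Psibar_inv_antimono[of m n u v] by auto
  show ?thesis
  proof (intro conjI impI)
    assume "\<theta> \<le> 1"
    then have "R v \<le> R u" if "u \<in> {0<..<1}" "v \<in> {0<..<1}" "u \<le> v" for u v
      unfolding R_def using assms x[OF that] by (intro beta_prime_density_ratio_mono) auto
    then show "concave_on {0<..<1} g"
      unfolding concave_on_def using g'
      by (intro convex_on_realI[where f' = "\<lambda>u. - R u"]) (auto intro: DERIV_minus)
  next
    assume "\<theta> > 1 \<and> h = 0"
    then have "R u \<le> R v" if "u \<in> {0<..<1}" "v \<in> {0<..<1}" "u \<le> v" for u v
      unfolding R_def using assms x[OF that]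
        beta_prime_density_ratio_antimono[of "m/2" "n/2" \<theta> "Psibar_inv m n v" "Psibar_inv m n u"]
      by simp
    then show "convex_on {0<..<1} g"
      using g' by (intro convex_on_realI[where f' = R]) auto
  qed
qed

end
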